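(* Let $p\ge 2$, $w\ge 0$ and $z\in\mathbb{R}^{p-1}$. Let $|z_{(1)}|\ge |z_{(2)}|\ge\cdots$ denote the absolute values of the entries of $z$ sorted in decreasing order. Define \[ \tilde\lambda_1=\min\{\lambda\ge0:\|S(z,\lambda)\|_1+\lambda\le w\},\quad \tilde\lambda_2=\max\{\lambda\ge0:\|S(z,\lambda)\|_1+\lambda\le w\},\quad \tilde\lambda_3=\max\{\lambda\ge0:\|S(z,2\lambda)\|_1\ge w\}. \] Then: (1) $\|z\|_\infty\le w$ if and only if $\tilde\lambda_1,\tilde\lambda_2$ are finite, in which case $\tilde\lambda_1\le |z_{(2)}|$ and $\tilde\lambda_2=w$. (2) $\|z\|_1\ge w>0$ if and only if $\tilde\lambda_3$ is finite, in which case $\tilde\lambda_3\le (1-w/\|z\|_1)\,\|z\|_\infty/2$. (3) If $w>0$ and $\|z\|_\infty\le w\le \|z\|_1$, then $\tilde\lambda_3\le\tilde\lambda_1\le\tilde\lambda_2$.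
   Context: $S(x,t)=\mathrm{sign}(x)\cdot(|x|-t)_+$ is the soft-thresholding function, applied componentwise to vectors. Conventions: the minimum of an empty set is $+\infty$, the maximum of an empty set is $-\infty$, and the maximum of a set unbounded above is $+\infty$; "finite" means not $\pm\infty$. If $p-1=1$, set $|z_{(2)}|:=0$. *)

theory Defs
  imports Complex_Main "HOL-Library.Extended_Real"
begin

definition soft :: "real \<Rightarrow> real \<Rightarrow> real" where
  "soft x t = sgn x * max (\<bar>x\<bar> - t) 0"

text \<open>Vectors in R^(p-1) are lists of length p-1.\<close>
definition l1norm :: "real list \<Rightarrow> real" where
  "l1norm z = sum_list (map abs z)"

definition linfnorm :: "real list \<Rightarrow> real" where
  "linfnorm z = Max (set (map abs z))"

definition soft_l1 :: "real list \<Rightarrow> real \<Rightarrow> real" where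
  "soft_l1 z t = l1norm (map (\<lambda>x. soft x t) z)"

text \<open>|z_(2)|: second largest absolute value; 0 if z has only one entry.\<close>
definition second_abs :: "real list \<Rightarrow> real" where
  "second_abs z = (if length z = 1 then 0 else rev (sort (map abs z)) ! 1)"

text \<open>Extended min / max: min of empty set = +inf, max of empty set = -inf,
  max of a set unbounded above = +inf (infimum / supremum in ereal).\<close>
definition emin :: "real set \<Rightarrow> ereal" where
  "emin A = Inf (ereal ` A)"

definition emax :: "real set \<Rightarrow> ereal" where
  "emax A = Sup (ereal ` A)"

definition lam1 :: "real list \<Rightarrow> real \<Rightarrow> ereal" where
  "lam1 z w = emin {t. t \<ge> 0 \<and> soft_l1 z t + t \<le> w}"

definition lam2 :: "real list \<Rightarrow> real \<Rightarrow> ereal" where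
  "lam2 z w = emax {t. t \<ge> 0 \<and> soft_l1 z t + t \<le> w}"

definition lam3 :: "real list \<Rightarrow> real \<Rightarrow> ereal" where
  "lam3 z w = emax {t. t \<ge> 0 \<and> soft_l1 z (2 * t) \<ge> w}"

definition efinite :: "ereal \<Rightarrow> bool" where
  "efinite x \<longleftrightarrow> x \<noteq> \<infinity> \<and> x \<noteq> -\<infinity>"

end

theory Submission
  imports Defs "HOL-Library.Multiset"
begin

text \<open>For \<open>t \<ge> 0\<close> the function \<open>t \<mapsto> \<parallel>S(z,t)\<parallel>\<^sub>1 = \<Sum>\<^sub>i max (\<bar>z\<^sub>i\<bar> - t) 0\<close> is
  nonincreasing, equals \<open>\<parallel>z\<parallel>\<^sub>1\<close> at \<open>0\<close>, vanishes from \<open>\<parallel>z\<parallel>\<^sub>\<infinity>\<close> on, and lies between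
  \<open>\<parallel>z\<parallel>\<^sub>\<infinity> - t\<close> and \<open>(1 - t/\<parallel>z\<parallel>\<^sub>\<infinity>) \<parallel>z\<parallel>\<^sub>1\<close>, since every entry loses at least the fraction
  \<open>t/\<parallel>z\<parallel>\<^sub>\<infinity>\<close> of itself. So the constraint set of \<open>\<lambda>\<^sub>1, \<lambda>\<^sub>2\<close> lies in \<open>[0,w]\<close>, is nonempty
  iff \<open>\<parallel>z\<parallel>\<^sub>\<infinity> \<le> w\<close>, and then contains \<open>w\<close> and the second largest \<open>\<bar>z\<^sub>i\<bar>\<close>, at which only the
  largest entry survives thresholding. The constraint set of \<open>\<lambda>\<^sub>3\<close> is all of \<open>[0,\<infinity>)\<close> if \<open>w = 0\<close>,
  empty if \<open>w > \<parallel>z\<parallel>\<^sub>1\<close>, and otherwise contains \<open>0\<close>; each of its elements satisfies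
  \<open>w \<le> \<parallel>S(z,2t)\<parallel>\<^sub>1 \<le> (1 - 2t/\<parallel>z\<parallel>\<^sub>\<infinity>) \<parallel>z\<parallel>\<^sub>1\<close>, which is the claimed bound. Finally, if \<open>t\<close> is
  feasible for \<open>\<lambda>\<^sub>3\<close> and \<open>s < t\<close> for \<open>\<lambda>\<^sub>1\<close>, then \<open>\<parallel>S(z,s)\<parallel>\<^sub>1 + s \<le> w \<le> \<parallel>S(z,2t)\<parallel>\<^sub>1 \<le> \<parallel>S(z,s)\<parallel>\<^sub>1\<close>
  forces \<open>s = 0\<close> and \<open>\<parallel>z\<parallel>\<^sub>1 \<le> w\<close>, contradicting \<open>w \<le> \<parallel>S(z,2t)\<parallel>\<^sub>1 < \<parallel>z\<parallel>\<^sub>1\<close>.\<close>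

lemma abs_soft: "0 \<le> t \<Longrightarrow> \<bar>soft x t\<bar> = max (\<bar>x\<bar> - t) 0"
  unfolding soft_def by (cases "x = 0") (auto simp: abs_mult sgn_if)

lemma soft_l1_eq_sum_list: "0 \<le> t \<Longrightarrow> soft_l1 z t = (\<Sum>x\<leftarrow>z. max (\<bar>x\<bar> - t) 0)"
  unfolding soft_l1_def l1norm_def map_map o_def
  by (intro arg_cong[where f = sum_list] map_cong refl) (rule abs_soft)

lemma soft_l1_nonneg: "0 \<le> soft_l1 z t"
  unfolding soft_l1_def l1norm_def by (rule sum_list_nonneg) auto

lemma soft_l1_zero: "soft_l1 z 0 = l1norm z"
  by (simp add: soft_l1_eq_sum_list l1norm_def)

lemma soft_l1_antimono: "0 \<le> s \<Longrightarrow> s \<le> t \<Longrightarrow> soft_l1 z t \<le> soft_l1 z s"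
  by (simp add: soft_l1_eq_sum_list sum_list_mono)

lemma soft_l1_le_l1norm: "0 \<le> t \<Longrightarrow> soft_l1 z t \<le> l1norm z"
  using soft_l1_antimono[of 0 t z] by (simp add: soft_l1_zero)

lemma soft_l1_less_l1norm:
  assumes "0 < t" and "0 < l1norm z"
  shows "soft_l1 z t < l1norm z"
proof -
  obtain y where "y \<in> set z" "y \<noteq> 0"
    using \<open>0 < l1norm z\<close> unfolding l1norm_def
    by (metis (no_types, lifting) less_irrefl sum_list_0 abs_eq_0_iff map_ext)
  then have "0 < min \<bar>y\<bar> t" using \<open>0 < t\<close> by simp
  also have "min \<bar>y\<bar> t \<le> (\<Sum>x\<leftarrow>z. min \<bar>x\<bar> t)"
    using \<open>y \<in> set z\<close> \<open>0 < t\<close> by (intro member_le_sum_list) (auto intro: sum_list_nonneg)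
  also have "(\<Sum>x\<leftarrow>z. min \<bar>x\<bar> t) = l1norm z - soft_l1 z t"
    using \<open>0 < t\<close> by (simp add: soft_l1_eq_sum_list l1norm_def sum_list_subtractf[symmetric])
      (intro arg_cong[where f = sum_list] map_cong; auto)
  finally show ?thesis by simp
qed

lemma abs_le_linfnorm: "x \<in> set z \<Longrightarrow> \<bar>x\<bar> \<le> linfnorm z"
  unfolding linfnorm_def by (rule Max_ge) auto

lemma linfnorm_attained: "z \<noteq> [] \<Longrightarrow> \<exists>x\<in>set z. \<bar>x\<bar> = linfnorm z"
proof -
  assume "z \<noteq> []"
  then have "linfnorm z \<in> set (map abs z)" unfolding linfnorm_def by (intro Max_in) auto
  then show ?thesis by auto
qed

lemma linfnorm_minus_le_soft_l1:
  assumes "z \<noteq> []" and "0 \<le> t"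
  shows "linfnorm z - t \<le> soft_l1 z t"
proof -
  obtain x where "x \<in> set z" "\<bar>x\<bar> = linfnorm z" using linfnorm_attained[OF \<open>z \<noteq> []\<close>] by blast
  then have "linfnorm z - t \<le> max (\<bar>x\<bar> - t) 0" by simp
  also have "\<dots> \<le> soft_l1 z t"
    unfolding soft_l1_eq_sum_list[OF \<open>0 \<le> t\<close>]
    using \<open>x \<in> set z\<close> by (intro member_le_sum_list) auto
  finally show ?thesis .
qed

lemma soft_l1_eq_0: "0 \<le> t \<Longrightarrow> linfnorm z \<le> t \<Longrightarrow> soft_l1 z t = 0"
  unfolding soft_l1_eq_sum_list
  by (rule sum_list_nonneg_eq_0_iff[THEN iffD2]) (auto dest: abs_le_linfnorm)

lemma max_abs_diff_le_scaled_abs: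
  fixes x s M :: real
  assumes "0 \<le> s" "s \<le> M" "\<bar>x\<bar> \<le> M" "0 < M"
  shows "max (\<bar>x\<bar> - s) 0 \<le> (1 - s / M) * \<bar>x\<bar>"
proof (cases "\<bar>x\<bar> \<le> s")
  case True
  have "0 \<le> 1 - s / M" using assms by simp
  then show ?thesis using True by simp
next
  case False
  have "s * \<bar>x\<bar> \<le> s * M" using assms by (simp add: mult_left_mono)
  then have "s * \<bar>x\<bar> / M \<le> s" using assms by (simp add: field_simps)
  then show ?thesis using False by (simp add: algebra_simps)
qed

lemma soft_l1_le_scaled_l1norm:
  assumes "0 \<le> s" "s \<le> linfnorm z" "0 < linfnorm z"
  shows "soft_l1 z s \<le> (1 - s / linfnorm z) * l1norm z"
proof -
  have "soft_l1 z s \<le> (\<Sum>x\<leftarrow>z. (1 - s / linfnorm z) * \<bar>x\<bar>)"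
    unfolding soft_l1_eq_sum_list[OF \<open>0 \<le> s\<close>]
    using assms by (intro sum_list_mono max_abs_diff_le_scaled_abs abs_le_linfnorm)
  also have "\<dots> = (1 - s / linfnorm z) * l1norm z"
    unfolding l1norm_def by (simp add: sum_list_const_mult o_def)
  finally show ?thesis .
qed

lemma second_abs_nonneg: "z \<noteq> [] \<Longrightarrow> 0 \<le> second_abs z"
proof (cases "length z = 1")
  case False
  assume "z \<noteq> []"
  then have "1 < length (rev (sort (map abs z)))" using False by (cases z) auto
  then have "rev (sort (map abs z)) ! 1 \<in> set (map abs z)"
    by (metis nth_mem set_rev set_sort)
  then show ?thesis using False unfolding second_abs_def by auto
qed (simp add: second_abs_def)

lemma sum_list_map_rev_sort:
  fixes g :: "'a::linorder \<Rightarrow> 'b::comm_monoid_add"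
  shows "sum_list (map g (rev (sort xs))) = sum_list (map g xs)"
  by (metis mset_map mset_rev mset_sort sum_mset_sum_list)

lemma soft_l1_second_abs:
  assumes "z \<noteq> []"
  shows "soft_l1 z (second_abs z) + second_abs z = linfnorm z"
proof (cases "length z = 1")
  case True
  then obtain x where "z = [x]" by (cases z) auto
  then show ?thesis unfolding second_abs_def linfnorm_def by (simp add: soft_l1_zero l1norm_def)
next
  case False
  define s where "s = rev (sort (map abs z))"
  have set_s: "set s = set (map abs z)" unfolding s_def by simp
  have "2 \<le> length s" using False \<open>z \<noteq> []\<close> unfolding s_def by (cases z) (auto simp: Suc_le_eq)
  then obtain a b r where s: "s = a # b # r"
    by (metis Suc_le_length_iff numeral_2_eq_2)
  have "sorted_wrt (\<ge>) s" unfolding s_def sorted_wrt_rev by simp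
  then have ab: "b \<le> a" and r: "\<forall>c\<in>set r. c \<le> b" using s by auto
  have b: "second_abs z = b" using False unfolding second_abs_def s_def[symmetric] s by simp
  have a: "linfnorm z = a"
    unfolding linfnorm_def set_s[symmetric] s using ab r by (intro Max_eqI) auto
  have "0 \<le> b" using second_abs_nonneg[OF \<open>z \<noteq> []\<close>] b by simp
  then have "soft_l1 z b = (\<Sum>x\<leftarrow>map abs z. max (x - b) 0)"
    by (simp add: soft_l1_eq_sum_list o_def)
  also have "\<dots> = (\<Sum>x\<leftarrow>s. max (x - b) 0)"
    unfolding s_def sum_list_map_rev_sort ..
  also have "\<dots> = a - b + (\<Sum>x\<leftarrow>r. max (x - b) 0)"
    using s ab by simp
  also have "(\<Sum>x\<leftarrow>r. max (x - b) 0) = 0"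
    using r by (intro sum_list_nonneg_eq_0_iff[THEN iffD2]) auto
  finally show ?thesis using a b by simp
qed

lemma emin_empty: "emin {} = \<infinity>"
  unfolding emin_def by (simp add: top_ereal_def)

lemma emax_empty: "emax {} = -\<infinity>"
  unfolding emax_def by (simp add: bot_ereal_def)

lemma emin_le: "a \<in> S \<Longrightarrow> emin S \<le> ereal a"
  unfolding emin_def by (rule Inf_lower) auto

lemma emax_ge: "a \<in> S \<Longrightarrow> ereal a \<le> emax S"
  unfolding emax_def by (rule Sup_upper) auto

lemma emin_greatest: "(\<And>x. x \<in> S \<Longrightarrow> b \<le> x) \<Longrightarrow> ereal b \<le> emin S"
  unfolding emin_def by (rule Inf_greatest) auto

lemma emax_least: "(\<And>x. x \<in> S \<Longrightarrow> x \<le> b) \<Longrightarrow> emax S \<le> ereal b"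
  unfolding emax_def by (rule Sup_least) auto

lemma emax_le_emin: "(\<And>s t. s \<in> S \<Longrightarrow> t \<in> T \<Longrightarrow> s \<le> t) \<Longrightarrow> emax S \<le> emin T"
  unfolding emax_def emin_def by (intro Sup_least Inf_greatest) auto

lemma efinite_emin: "a \<in> S \<Longrightarrow> (\<And>x. x \<in> S \<Longrightarrow> b \<le> x) \<Longrightarrow> efinite (emin S)"
  unfolding efinite_def using emin_le[of a S] emin_greatest[of S b] by auto

lemma efinite_emax: "a \<in> S \<Longrightarrow> (\<And>x. x \<in> S \<Longrightarrow> x \<le> b) \<Longrightarrow> efinite (emax S)"
  unfolding efinite_def using emax_ge[of a S] emax_least[of S b] by auto

lemma emax_unbounded: "(\<And>b. \<exists>x\<in>S. b \<le> x) \<Longrightarrow> emax S = \<infinity>"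
proof (rule ereal_top)
  fix b assume "\<And>b. \<exists>x\<in>S. b \<le> x"
  then obtain x where "x \<in> S" "b \<le> x" by blast
  then have "ereal b \<le> ereal x" by simp
  also have "\<dots> \<le> emax S" using \<open>x \<in> S\<close> by (rule emax_ge)
  finally show "ereal b \<le> emax S" .
qed

definition lam12_set :: "real list \<Rightarrow> real \<Rightarrow> real set" where
  "lam12_set z w = {t. 0 \<le> t \<and> soft_l1 z t + t \<le> w}"

definition lam3_set :: "real list \<Rightarrow> real \<Rightarrow> real set" where
  "lam3_set z w = {t. 0 \<le> t \<and> w \<le> soft_l1 z (2 * t)}"

lemma lam1_eq_emin: "lam1 z w = emin (lam12_set z w)"
  and lam2_eq_emax: "lam2 z w = emax (lam12_set z w)"
  and lam3_eq_emax: "lam3 z w = emax (lam3_set z w)"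
  by (simp_all add: lam1_def lam2_def lam3_def lam12_set_def lam3_set_def)

lemma lam12_set_nonneg: "t \<in> lam12_set z w \<Longrightarrow> 0 \<le> t"
  unfolding lam12_set_def by simp

lemma lam12_set_le: "t \<in> lam12_set z w \<Longrightarrow> t \<le> w"
  unfolding lam12_set_def using soft_l1_nonneg[of z t] by simp

lemma mem_lam12_set_self: "0 \<le> w \<Longrightarrow> linfnorm z \<le> w \<Longrightarrow> w \<in> lam12_set z w"
  unfolding lam12_set_def by (simp add: soft_l1_eq_0)

lemma second_abs_mem_lam12_set:
  "z \<noteq> [] \<Longrightarrow> linfnorm z \<le> w \<Longrightarrow> second_abs z \<in> lam12_set z w"
  unfolding lam12_set_def by (simp add: second_abs_nonneg soft_l1_second_abs)

lemma linfnorm_le_if_mem_lam12_set: "z \<noteq> [] \<Longrightarrow> t \<in> lam12_set z w \<Longrightarrow> linfnorm z \<le> w"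
  unfolding lam12_set_def using linfnorm_minus_le_soft_l1[of z t] by auto

lemma le_scaled_linfnorm_if_le_soft_l1:
  assumes "0 < w" "0 \<le> s" "w \<le> soft_l1 z s"
  shows "s \<le> (1 - w / l1norm z) * linfnorm z"
proof -
  define M where "M = linfnorm z"
  define L where "L = l1norm z"
  have "s < M"
  proof (rule ccontr)
    assume "\<not> s < M"
    then show False using assms soft_l1_eq_0[of s z] by (simp add: M_def)
  qed
  have "w \<le> L" using assms soft_l1_le_l1norm[of s z] by (simp add: L_def)
  have "w \<le> (1 - s / M) * L"
    using assms \<open>s < M\<close> soft_l1_le_scaled_l1norm[of s z] by (simp add: M_def L_def)
  then have "s * L \<le> (L - w) * M"
    using \<open>s < M\<close> assms(2) by (simp add: field_simps)
  then have "s \<le> (L - w) * M / L"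
    using \<open>w \<le> L\<close> assms(1) by (simp add: field_simps)
  also have "\<dots> = (1 - w / L) * M"
    using \<open>w \<le> L\<close> assms(1) by (simp add: field_simps)
  finally show ?thesis by (simp add: M_def L_def)
qed

lemma lam3_set_le: "0 < w \<Longrightarrow> t \<in> lam3_set z w \<Longrightarrow> t \<le> (1 - w / l1norm z) * linfnorm z / 2"
  unfolding lam3_set_def using le_scaled_linfnorm_if_le_soft_l1[of w "2 * t" z] by simp

lemma lam3_set_le_lam12_set:
  assumes "0 < w" "t \<in> lam3_set z w" "s \<in> lam12_set z w"
  shows "t \<le> s"
proof (rule ccontr)
  assume "\<not> t \<le> s"
  have "0 \<le> s" "soft_l1 z s + s \<le> w" using assms(3) unfolding lam12_set_def by auto
  have "w \<le> soft_l1 z (2 * t)" using assms(2) unfolding lam3_set_def by simp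
  also have "\<dots> \<le> soft_l1 z s" using \<open>\<not> t \<le> s\<close> \<open>0 \<le> s\<close> by (intro soft_l1_antimono) auto
  finally have "s = 0" using \<open>soft_l1 z s + s \<le> w\<close> \<open>0 \<le> s\<close> by simp
  then have "l1norm z \<le> w" using \<open>soft_l1 z s + s \<le> w\<close> by (simp add: soft_l1_zero)
  moreover have "soft_l1 z (2 * t) < l1norm z"
    using \<open>w \<le> soft_l1 z (2 * t)\<close> \<open>\<not> t \<le> s\<close> \<open>s = 0\<close> assms(1)
      soft_l1_le_l1norm[of "2 * t" z] by (intro soft_l1_less_l1norm) auto
  ultimately show False using \<open>w \<le> soft_l1 z (2 * t)\<close> by simp
qed

lemma linfnorm_le_iff_efinite_lam12:
  assumes "z \<noteq> []" and "0 \<le> w"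
  shows "linfnorm z \<le> w \<longleftrightarrow> efinite (lam1 z w) \<and> efinite (lam2 z w)"
proof
  assume "linfnorm z \<le> w"
  with \<open>0 \<le> w\<close> have w: "w \<in> lam12_set z w" by (rule mem_lam12_set_self)
  show "efinite (lam1 z w) \<and> efinite (lam2 z w)"
    unfolding lam1_eq_emin lam2_eq_emax
    using efinite_emin[OF w lam12_set_nonneg] efinite_emax[OF w lam12_set_le] ..
next
  assume "efinite (lam1 z w) \<and> efinite (lam2 z w)"
  then have "emin (lam12_set z w) \<noteq> \<infinity>" by (simp add: lam1_eq_emin efinite_def)
  then have "lam12_set z w \<noteq> {}" by (metis emin_empty)
  then obtain t where "t \<in> lam12_set z w" by blast
  with \<open>z \<noteq> []\<close> show "linfnorm z \<le> w" by (rule linfnorm_le_if_mem_lam12_set)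
qed

lemma lam1_le_second_abs: "z \<noteq> [] \<Longrightarrow> linfnorm z \<le> w \<Longrightarrow> lam1 z w \<le> ereal (second_abs z)"
  unfolding lam1_eq_emin by (intro emin_le second_abs_mem_lam12_set)

lemma lam2_eq:
  assumes "0 \<le> w" and "linfnorm z \<le> w"
  shows "lam2 z w = ereal w"
  unfolding lam2_eq_emax
proof (rule antisym)
  show "emax (lam12_set z w) \<le> ereal w" by (rule emax_least) (rule lam12_set_le)
  show "ereal w \<le> emax (lam12_set z w)" using assms by (intro emax_ge mem_lam12_set_self)
qed

lemma lam1_le_lam2: "0 \<le> w \<Longrightarrow> linfnorm z \<le> w \<Longrightarrow> lam1 z w \<le> lam2 z w"
  unfolding lam2_eq lam1_eq_emin by (intro emin_le mem_lam12_set_self)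

lemma efinite_lam3_iff:
  assumes "0 \<le> w"
  shows "w \<le> l1norm z \<and> 0 < w \<longleftrightarrow> efinite (lam3 z w)"
proof
  assume w: "w \<le> l1norm z \<and> 0 < w"
  then have "0 \<in> lam3_set z w" unfolding lam3_set_def by (simp add: soft_l1_zero)
  with w show "efinite (lam3 z w)"
    unfolding lam3_eq_emax
    by (intro efinite_emax[where b = "(1 - w / l1norm z) * linfnorm z / 2"] lam3_set_le) auto
next
  assume fin: "efinite (lam3 z w)"
  consider "w = 0" | "l1norm z < w" | "w \<le> l1norm z \<and> 0 < w" using assms by linarith
  then show "w \<le> l1norm z \<and> 0 < w"
  proof cases
    case 1
    have "max b 0 \<in> lam3_set z w" for b
      using \<open>w = 0\<close> by (simp add: lam3_set_def soft_l1_nonneg)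
    then have "lam3 z w = \<infinity>" unfolding lam3_eq_emax by (intro emax_unbounded) (use max.cobounded1 in blast)
    with fin show ?thesis by (simp add: efinite_def)
  next
    case 2
    have "lam3_set z w = {}"
    proof (intro equals0I)
      fix t assume "t \<in> lam3_set z w"
      then have "0 \<le> t" and "w \<le> soft_l1 z (2 * t)" by (simp_all add: lam3_set_def)
      then show False using soft_l1_le_l1norm[of "2 * t" z] \<open>l1norm z < w\<close> by simp
    qed
    with fin show ?thesis by (simp add: lam3_eq_emax emax_empty efinite_def)
  qed
qed

lemma lam3_le: "0 < w \<Longrightarrow> lam3 z w \<le> ereal ((1 - w / l1norm z) * linfnorm z / 2)"
  unfolding lam3_eq_emax by (intro emax_least lam3_set_le)

lemma lam3_le_lam1: "0 < w \<Longrightarrow> lam3 z w \<le> lam1 z w"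
  unfolding lam3_eq_emax lam1_eq_emin by (intro emax_le_emin lam3_set_le_lam12_set)

theorem lemma2:
  fixes p :: nat and w :: real and z :: "real list"
  assumes "p \<ge> 2" and "w \<ge> 0" and "length z = p - 1"
  shows "(linfnorm z \<le> w \<longleftrightarrow> efinite (lam1 z w) \<and> efinite (lam2 z w))
       \<and> (linfnorm z \<le> w \<longrightarrow> lam1 z w \<le> ereal (second_abs z) \<and> lam2 z w = ereal w)
       \<and> (l1norm z \<ge> w \<and> w > 0 \<longleftrightarrow> efinite (lam3 z w))
       \<and> (l1norm z \<ge> w \<and> w > 0 \<longrightarrow>
            lam3 z w \<le> ereal ((1 - w / l1norm z) * linfnorm z / 2))
       \<and> (w > 0 \<and> linfnorm z \<le> w \<and> w \<le> l1norm z \<longrightarrow>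
            lam3 z w \<le> lam1 z w \<and> lam1 z w \<le> lam2 z w)"
proof (intro conjI impI)
  have "z \<noteq> []" using assms(1,3) by auto
  show "linfnorm z \<le> w \<longleftrightarrow> efinite (lam1 z w) \<and> efinite (lam2 z w)"
    using \<open>z \<noteq> []\<close> \<open>w \<ge> 0\<close> by (rule linfnorm_le_iff_efinite_lam12)
  show "w \<le> l1norm z \<and> 0 < w \<longleftrightarrow> efinite (lam3 z w)"
    using \<open>w \<ge> 0\<close> by (rule efinite_lam3_iff)
  assume "linfnorm z \<le> w"
  then show "lam1 z w \<le> ereal (second_abs z)" using \<open>z \<noteq> []\<close> by (intro lam1_le_second_abs)
  show "lam2 z w = ereal w" using \<open>w \<ge> 0\<close> \<open>linfnorm z \<le> w\<close> by (rule lam2_eq)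
next
  assume "w \<le> l1norm z \<and> 0 < w"
  then show "lam3 z w \<le> ereal ((1 - w / l1norm z) * linfnorm z / 2)" by (intro lam3_le) simp
next
  assume "0 < w \<and> linfnorm z \<le> w \<and> w \<le> l1norm z"
  then show "lam3 z w \<le> lam1 z w" and "lam1 z w \<le> lam2 z w"
    using \<open>w \<ge> 0\<close> by (simp_all add: lam3_le_lam1 lam1_le_lam2)
qed

end
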